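(* Let $\mathfrak{g}$ be a finite-dimensional real Lie algebra and, for a fixed sign $\pm$, let $\mathbf{M}_{\pm}\colon T^{*}\mathfrak{g} = \mathfrak{g}\times\mathfrak{g}^{*}\to\mathfrak{g}^{*}$ be $\mathbf{M}_{\pm}(q,p) = \mp\operatorname{ad}_{q}^{*}p$. If the center $\mathfrak{z}(\mathfrak{g}) = \{ z\in\mathfrak{g} : [z,x]=0 \ \forall x\in\mathfrak{g}\}$ is nontrivial, then $\mathbf{M}_{\pm}(T^{*}\mathfrak{g}) \subsetneq \mathfrak{g}^{*}$. Equivalently, a necessary condition for $\mathbf{M}_{\pm}(T^{*}\mathfrak{g}) = \mathfrak{g}^{*}$ is that $\mathfrak{z}(\mathfrak{g}) = \{0\}$.
   Context: $\operatorname{ad}_{x}^{*}\colon\mathfrak{g}^{*}\to\mathfrak{g}^{*}$ is the dual of $\operatorname{ad}_{x} = [x,\cdot\,]$, i.e. $\langle \operatorname{ad}_{x}^{*}\alpha, y\rangle = \langle \alpha, [x,y]\rangle$, with $\langle\cdot,\cdot\rangle$ the natural pairing of $\mathfrak{g}^{*}$ and $\mathfrak{g}$. *)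

theory Defs
  imports "HOL-Analysis.Analysis"
begin

definition lie_algebra :: "('a::euclidean_space \<Rightarrow> 'a \<Rightarrow> 'a) \<Rightarrow> bool" where
  "lie_algebra br \<longleftrightarrow> bilinear br \<and> (\<forall>x. br x x = 0) \<and>
     (\<forall>x y z. br x (br y z) + br y (br z x) + br z (br x y) = 0)"

definition dual_space :: "('a::euclidean_space \<Rightarrow> real) set" where
  "dual_space = {\<alpha>. linear \<alpha>}"

definition ad_star :: "('a \<Rightarrow> 'a \<Rightarrow> 'a) \<Rightarrow> 'a \<Rightarrow> ('a \<Rightarrow> real) \<Rightarrow> ('a \<Rightarrow> real)" where
  "ad_star br x \<alpha> = (\<lambda>y. \<alpha> (br x y))"

definition lie_center :: "('a \<Rightarrow> 'a \<Rightarrow> 'a::zero) \<Rightarrow> 'a set" where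
  "lie_center br = {z. \<forall>x. br z x = 0}"

text \<open>Momentum map M_\<pm>(q,p) = \<mp> ad*_q p; the sign \<pm> is encoded by s \<in> {1,-1},
  so M(q,p) = -s \<cdot> ad*_q p.\<close>
definition momentum_map :: "real \<Rightarrow> ('a \<Rightarrow> 'a \<Rightarrow> 'a) \<Rightarrow> 'a \<times> ('a \<Rightarrow> real) \<Rightarrow> ('a \<Rightarrow> real)" where
  "momentum_map s br qp = (\<lambda>y. - s * ad_star br (fst qp) (snd qp) y)"

end

theory Submission
  imports Defs
begin

text \<open>Skew-symmetry of the bracket puts a central element z into the kernel of every
  ad*_q p, since (ad*_q p) z = p [q,z] = -p [z,q] = 0. Hence every value of the
  momentum map annihilates the center, and a functional not vanishing at a nonzero
  central element, such as y \<mapsto> y \<bullet> z, is missed.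
  Neither the sign s nor the Jacobi identity plays a role.\<close>

lemma lie_algebra_bilinear: "lie_algebra br \<Longrightarrow> bilinear br"
  unfolding lie_algebra_def by blast

lemma lie_algebra_skew:
  assumes "lie_algebra br"
  shows "br y x = - br x y"
proof -
  have bil: "bilinear br" and alt: "\<And>x. br x x = 0"
    using assms unfolding lie_algebra_def by auto
  have "0 = br (x + y) (x + y)" using alt by simp
  also have "\<dots> = br x x + br x y + br y x + br y y"
    using bilinear_ladd[OF bil] bilinear_radd[OF bil] by (simp add: algebra_simps)
  finally show ?thesis using alt by (simp add: eq_neg_iff_add_eq_0 add.commute)
qed

lemma zero_in_lie_center: "bilinear br \<Longrightarrow> 0 \<in> lie_center br"
  unfolding lie_center_def using bilinear_lzero by blast

lemma lie_center_bracket_right: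
  assumes "lie_algebra br" and "z \<in> lie_center br"
  shows "br x z = 0"
  using assms lie_algebra_skew[OF assms(1), of z x] unfolding lie_center_def by simp

lemma inner_left_in_dual_space: "(\<lambda>y. y \<bullet> z) \<in> dual_space"
  unfolding dual_space_def by (simp add: bounded_linear.linear bounded_linear_inner_left)

lemma momentum_map_in_dual_space:
  assumes "bilinear br" and "p \<in> dual_space"
  shows "momentum_map s br (q, p) \<in> dual_space"
proof -
  have "linear (br q)" using assms(1) unfolding bilinear_def by blast
  then have "linear (p \<circ> br q)" using assms(2) unfolding dual_space_def
    by (blast intro: linear_compose)
  then have "linear (\<lambda>y. - s * (p \<circ> br q) y)"
    by (auto simp: linear_iff algebra_simps)
  then show ?thesis unfolding momentum_map_def ad_star_def dual_space_def by (simp add: o_def)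
qed

lemma momentum_map_vanishes_on_center:
  assumes "lie_algebra br" and "z \<in> lie_center br" and "p \<in> dual_space"
  shows "momentum_map s br (q, p) z = 0"
proof -
  have "linear p" using assms(3) unfolding dual_space_def by blast
  then have "p (br q z) = 0"
    using lie_center_bracket_right[OF assms(1,2)] linear_0 by simp
  then show ?thesis unfolding momentum_map_def ad_star_def by simp
qed

theorem proposition4p1:
  fixes br :: "'a::euclidean_space \<Rightarrow> 'a \<Rightarrow> 'a" and s :: real
  assumes "lie_algebra br"
    and "s = 1 \<or> s = -1"
    and "lie_center br \<noteq> {0}"
  shows "momentum_map s br ` (UNIV \<times> dual_space) \<subset> dual_space"
proof -
  have bil: "bilinear br" using assms(1) by (rule lie_algebra_bilinear)
  obtain z where central: "z \<in> lie_center br" and nonzero: "z \<noteq> 0"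
    using assms(3) zero_in_lie_center[OF bil] by blast
  have image_subset: "momentum_map s br ` (UNIV \<times> dual_space) \<subseteq> dual_space"
    using momentum_map_in_dual_space[OF bil] by auto
  have "(\<lambda>y. y \<bullet> z) \<notin> momentum_map s br ` (UNIV \<times> dual_space)"
  proof
    assume "(\<lambda>y. y \<bullet> z) \<in> momentum_map s br ` (UNIV \<times> dual_space)"
    then obtain q p where "p \<in> dual_space" and "(\<lambda>y. y \<bullet> z) = momentum_map s br (q, p)"
      by auto
    then have "z \<bullet> z = 0"
      using momentum_map_vanishes_on_center[OF assms(1) central] by metis
    with nonzero show False by simp
  qed
  with image_subset inner_left_in_dual_space show ?thesis by blast
qed

end
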